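(* Let $R$ be an integral domain, $n\ge2$, and $I$ a proper subset of $\{1,\ldots,n\}$. Then $\mathbf{U}_n(R)$ is the Hirsch–Plotkin radical of $\mathbf{S}^I_n(R)$, i.e. the unique maximal normal locally nilpotent subgroup of $\mathbf{S}^I_n(R)$. In particular, $\mathbf{U}_n(R)$ is a characteristic subgroup of $\mathbf{S}^I_n(R)$.
   Context: $\mathbf{S}^I_n(R)$ is the group of upper triangular $n\times n$ matrices over $R$ with diagonal entries in $U(R)$, the $j$-th diagonal entry equal to $1$ for $j\notin I$; $\mathbf{U}_n(R)$ is its subgroup of upper unitriangular matrices. *)

theory Defs
  imports "Jordan_Normal_Form.Matrix" "HOL-Algebra.Coset" "HOL-Algebra.Generated_Groups"
begin

text \<open>Matrices are n x n with 0-based indices 0..n-1 (Jordan_Normal_Form convention).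
  The ring R is an integral domain, rendered as a type of class idom; U(R) = {x. x dvd 1}.\<close>

definition S_mat :: "nat \<Rightarrow> nat set \<Rightarrow> 'a::idom mat set" where
  "S_mat n I = {A \<in> carrier_mat n n. upper_triangular A
      \<and> (\<forall>i<n. A $$ (i,i) dvd 1) \<and> (\<forall>i<n. i \<notin> I \<longrightarrow> A $$ (i,i) = 1)}"

definition U_mat :: "nat \<Rightarrow> 'a::idom mat set" where
  "U_mat n = {A \<in> carrier_mat n n. upper_triangular A \<and> (\<forall>i<n. A $$ (i,i) = 1)}"

definition S_group :: "nat \<Rightarrow> nat set \<Rightarrow> ('a::idom mat) monoid" where
  "S_group n I = \<lparr>carrier = S_mat n I, mult = (*), one = 1\<^sub>m n\<rparr>"

definition comm_set :: "('g, 'b) monoid_scheme \<Rightarrow> 'g set \<Rightarrow> 'g set \<Rightarrow> 'g set" where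
  "comm_set G A B = {a \<otimes>\<^bsub>G\<^esub> b \<otimes>\<^bsub>G\<^esub> inv\<^bsub>G\<^esub> a \<otimes>\<^bsub>G\<^esub> inv\<^bsub>G\<^esub> b | a b. a \<in> A \<and> b \<in> B}"

fun lower_central :: "('g, 'b) monoid_scheme \<Rightarrow> 'g set \<Rightarrow> nat \<Rightarrow> 'g set" where
  "lower_central G H 0 = H"
| "lower_central G H (Suc k) = generate G (comm_set G (lower_central G H k) H)"

definition nilpotent_subgroup :: "('g, 'b) monoid_scheme \<Rightarrow> 'g set \<Rightarrow> bool" where
  "nilpotent_subgroup G H \<longleftrightarrow> subgroup H G \<and> (\<exists>k. lower_central G H k = {\<one>\<^bsub>G\<^esub>})"

definition locally_nilpotent_subgroup :: "('g, 'b) monoid_scheme \<Rightarrow> 'g set \<Rightarrow> bool" where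
  "locally_nilpotent_subgroup G H \<longleftrightarrow> subgroup H G \<and>
     (\<forall>F. finite F \<and> F \<subseteq> H \<longrightarrow> nilpotent_subgroup G (generate G F))"

text \<open>H is the Hirsch-Plotkin radical of G: a normal locally nilpotent subgroup containing
  every normal locally nilpotent subgroup (hence the unique maximal one).\<close>
definition hirsch_plotkin_radical :: "('g, 'b) monoid_scheme \<Rightarrow> 'g set \<Rightarrow> bool" where
  "hirsch_plotkin_radical G H \<longleftrightarrow> H \<lhd> G \<and> locally_nilpotent_subgroup G H \<and>
     (\<forall>N. N \<lhd> G \<and> locally_nilpotent_subgroup G N \<longrightarrow> N \<subseteq> H)"

definition characteristic_subgroup :: "('g, 'b) monoid_scheme \<Rightarrow> 'g set \<Rightarrow> bool" where
  "characteristic_subgroup G H \<longleftrightarrow> subgroup H G \<and> (\<forall>\<phi> \<in> iso G G. \<phi> ` H = H)"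

end

theory Submission
  imports Defs "Jordan_Normal_Form.Determinant"
begin

(*
  Write U^(k) for the unitriangular matrices whose entries below the (k+1)-st superdiagonal
  vanish. Then [U^(k), U^(l)] \<subseteq> U^(k+l+1), so the lower central series of every subgroup of
  U = U^(0) reaches 1 after n steps, and U is normal because commutators of triangular matrices
  are unitriangular. Conversely let N be a normal locally nilpotent subgroup and g \<in> N - U.
  Some diagonal entry of g is forced to be 1 and not all of them are, so two adjacent diagonal
  entries g_ii and g_(i+1)(i+1) differ. For u \<in> U the (i,i+1) entry of [u,g] times g_(i+1)(i+1)
  is u_(i,i+1) (g_(i+1)(i+1) - g_ii), which is nonzero in a domain whenever u_(i,i+1) is. Starting
  from the transvection t = 1 + E_(i,i+1), the iterated commutators [...[[t,g],g]...,g] therefore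
  never become 1, although they run through the lower central series of the nilpotent group
  generated by g and [t,g] \<subseteq> N.
*)

section \<open>Upper triangular matrices\<close>

lemma upper_triangular_mult_entry:
  fixes A B :: "'a::semiring_0 mat"
  assumes A: "A \<in> carrier_mat n n" "upper_triangular A"
    and B: "B \<in> carrier_mat n n" "upper_triangular B"
    and "i < n" "j < n"
  shows "(A * B) $$ (i, j) = (\<Sum>k\<in>{i..j}. A $$ (i, k) * B $$ (k, j))"
proof -
  have "(A * B) $$ (i, j) = (\<Sum>k\<in>{0..<n}. A $$ (i, k) * B $$ (k, j))"
    using assms by (simp add: scalar_prod_def)
  also have "\<dots> = (\<Sum>k\<in>{i..j}. A $$ (i, k) * B $$ (k, j))"
    using assms by (intro sum.mono_neutral_right) (auto simp: not_le upper_triangularD)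
  finally show ?thesis .
qed

lemma upper_triangular_mult:
  fixes A B :: "'a::semiring_0 mat"
  assumes "A \<in> carrier_mat n n" "upper_triangular A" "B \<in> carrier_mat n n" "upper_triangular B"
  shows "upper_triangular (A * B)"
  using assms upper_triangular_mult_entry[OF assms] by (intro upper_triangularI) auto

lemma diag_mult_upper_triangular:
  fixes A B :: "'a::semiring_0 mat"
  assumes "A \<in> carrier_mat n n" "upper_triangular A" "B \<in> carrier_mat n n" "upper_triangular B"
    and "i < n"
  shows "(A * B) $$ (i, i) = A $$ (i, i) * B $$ (i, i)"
  using upper_triangular_mult_entry[OF assms(1-4)] assms(5) by simp

lemma superdiag_mult_upper_triangular:
  fixes A B :: "'a::semiring_0 mat"
  assumes "A \<in> carrier_mat n n" "upper_triangular A" "B \<in> carrier_mat n n" "upper_triangular B"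
    and "Suc i < n"
  shows "(A * B) $$ (i, Suc i) = A $$ (i, i) * B $$ (i, Suc i) + A $$ (i, Suc i) * B $$ (Suc i, Suc i)"
proof -
  have "{i..Suc i} = {i, Suc i}" by auto
  then show ?thesis using upper_triangular_mult_entry[OF assms(1-4)] assms(5) by simp
qed

lemma left_inverse_upper_triangular:
  fixes A B :: "'a::idom mat"
  assumes A: "A \<in> carrier_mat n n" "upper_triangular A" "\<And>i. i < n \<Longrightarrow> A $$ (i, i) \<noteq> 0"
    and B: "B \<in> carrier_mat n n" and BA: "B * A = 1\<^sub>m n"
  shows "upper_triangular B"
proof -
  have "\<forall>i. j < i \<longrightarrow> i < n \<longrightarrow> B $$ (i, j) = 0" for j
  proof (induction j rule: less_induct)
    case (less j)
    show ?case
    proof (intro allI impI)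
      fix i assume ij: "j < i" "i < n"
      have "0 = (B * A) $$ (i, j)" using BA ij by simp
      also have "\<dots> = (\<Sum>k\<in>{0..<n}. B $$ (i, k) * A $$ (k, j))"
        using A B ij by (simp add: scalar_prod_def)
      also have "\<dots> = (\<Sum>k\<in>{j}. B $$ (i, k) * A $$ (k, j))"
      proof (intro sum.mono_neutral_right ballI)
        fix k assume "k \<in> {0..<n} - {j}"
        then consider "k < j" | "j < k" "k < n" by force
        then show "B $$ (i, k) * A $$ (k, j) = 0"
          by cases (use less ij A in \<open>auto simp: upper_triangularD\<close>)
      qed (use ij in auto)
      finally show "B $$ (i, j) = 0" using A(3) ij by simp
    qed
  qed
  then show ?thesis using B by auto
qed

definition zero_below_superdiag :: "nat \<Rightarrow> 'a::zero mat \<Rightarrow> bool" where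
  "zero_below_superdiag k A \<longleftrightarrow> (\<forall>i<dim_row A. \<forall>j<dim_col A. j < i + k \<longrightarrow> A $$ (i, j) = 0)"

lemma upper_triangular_imp_zero_below_superdiag:
  "upper_triangular A \<Longrightarrow> zero_below_superdiag 0 A"
  unfolding zero_below_superdiag_def by (auto simp: upper_triangularD)

lemma zero_below_superdiag_mult:
  fixes A B :: "'a::semiring_0 mat"
  assumes "A \<in> carrier_mat n n" "B \<in> carrier_mat n n"
    and "zero_below_superdiag k A" "zero_below_superdiag l B"
  shows "zero_below_superdiag (k + l) (A * B)"
  unfolding zero_below_superdiag_def
proof (intro allI impI)
  fix i j assume ij: "i < dim_row (A * B)" "j < dim_col (A * B)" "j < i + (k + l)"
  have "(A * B) $$ (i, j) = (\<Sum>m\<in>{0..<n}. A $$ (i, m) * B $$ (m, j))"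
    using assms ij by (simp add: scalar_prod_def)
  also have "\<dots> = 0"
  proof (intro sum.neutral ballI)
    fix m assume "m \<in> {0..<n}"
    then show "A $$ (i, m) * B $$ (m, j) = 0"
      using assms ij unfolding zero_below_superdiag_def
      by (cases "m < i + k") auto
  qed
  finally show "(A * B) $$ (i, j) = 0" .
qed

lemma zero_below_superdiag_add:
  fixes A B :: "'a::monoid_add mat"
  shows "A \<in> carrier_mat n n \<Longrightarrow> B \<in> carrier_mat n n \<Longrightarrow> zero_below_superdiag k A \<Longrightarrow>
    zero_below_superdiag k B \<Longrightarrow> zero_below_superdiag k (A + B)"
  unfolding zero_below_superdiag_def by auto

lemma zero_below_superdiag_minus:
  fixes A B :: "'a::ab_group_add mat"
  shows "A \<in> carrier_mat n n \<Longrightarrow> B \<in> carrier_mat n n \<Longrightarrow> zero_below_superdiag k A \<Longrightarrow>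
    zero_below_superdiag k B \<Longrightarrow> zero_below_superdiag k (A - B)"
  unfolding zero_below_superdiag_def by auto

lemma zero_below_superdiag_uminus:
  fixes A :: "'a::group_add mat"
  shows "zero_below_superdiag k A \<Longrightarrow> zero_below_superdiag k (- A)"
  unfolding zero_below_superdiag_def by auto

lemma zero_below_superdiag_mono:
  "zero_below_superdiag l A \<Longrightarrow> k \<le> l \<Longrightarrow> zero_below_superdiag k A"
  unfolding zero_below_superdiag_def by auto

lemma zero_below_superdiag_cancel_right:
  fixes X M M' :: "'a::semiring_1 mat"
  assumes "X \<in> carrier_mat n n" "M \<in> carrier_mat n n" "M' \<in> carrier_mat n n"
    and "M * M' = 1\<^sub>m n" "upper_triangular M'" "zero_below_superdiag k (X * M)"
  shows "zero_below_superdiag k X"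
proof -
  have "X = X * M * M'"
    using assms by (simp add: assoc_mult_mat[of X n n M n M' n])
  moreover have "zero_below_superdiag (k + 0) (X * M * M')"
    using assms by (intro zero_below_superdiag_mult upper_triangular_imp_zero_below_superdiag) auto
  ultimately show ?thesis by simp
qed

lemma commutator_minus_mat:
  fixes a b :: "'a::comm_ring_1 mat"
  assumes "a \<in> carrier_mat n n" "b \<in> carrier_mat n n"
  shows "a * b - b * a = (a - 1\<^sub>m n) * (b - 1\<^sub>m n) - (b - 1\<^sub>m n) * (a - 1\<^sub>m n)"
proof -
  have expand: "(x - 1\<^sub>m n) * (y - 1\<^sub>m n) = x * y - x - y + 1\<^sub>m n"
    if "x \<in> carrier_mat n n" "y \<in> carrier_mat n n" for x y :: "'a mat"
  proof -
    have "(x - 1\<^sub>m n) * (y - 1\<^sub>m n) = x * (y - 1\<^sub>m n) - 1\<^sub>m n * (y - 1\<^sub>m n)"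
      using that by (intro minus_mult_distrib_mat) auto
    also have "\<dots> = (x * y - x) - (y - 1\<^sub>m n)"
      using that by (simp add: mult_minus_distrib_mat)
    finally show ?thesis using that by (intro eq_matI) auto
  qed
  show ?thesis using assms by (simp add: expand) (intro eq_matI; simp)
qed

definition unitriangular_level :: "nat \<Rightarrow> nat \<Rightarrow> 'a::comm_ring_1 mat set" where
  "unitriangular_level n k = {A \<in> carrier_mat n n. zero_below_superdiag (Suc k) (A - 1\<^sub>m n)}"

lemma U_mat_eq_unitriangular_level_0: "U_mat n = unitriangular_level n 0"
proof (intro equalityI subsetI)
  fix A :: "'a mat" assume A: "A \<in> unitriangular_level n 0"
  have "A $$ (i, j) = 1\<^sub>m n $$ (i, j)" if "i < n" "j < n" "j \<le> i" for i j
  proof -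
    have "(A - 1\<^sub>m n) $$ (i, j) = 0"
      using A that unfolding unitriangular_level_def zero_below_superdiag_def by auto
    then show ?thesis using A that by (simp add: unitriangular_level_def)
  qed
  then show "A \<in> U_mat n"
    using A unfolding U_mat_def unitriangular_level_def by (auto intro!: upper_triangularI)
qed (auto simp: U_mat_def unitriangular_level_def zero_below_superdiag_def upper_triangularD)

lemma unitriangular_level_antimono: "k \<le> l \<Longrightarrow> unitriangular_level n l \<subseteq> unitriangular_level n k"
  unfolding unitriangular_level_def by (auto intro: zero_below_superdiag_mono)

lemma unitriangular_level_top:
  assumes "A \<in> unitriangular_level n n"
  shows "A = 1\<^sub>m n"
proof (rule eq_matI)
  fix i j assume ij: "i < dim_row (1\<^sub>m n)" "j < dim_col (1\<^sub>m n)"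
  then have "(A - 1\<^sub>m n) $$ (i, j) = 0"
    using assms unfolding unitriangular_level_def zero_below_superdiag_def by auto
  then show "A $$ (i, j) = 1\<^sub>m n $$ (i, j)" using assms ij by (simp add: unitriangular_level_def)
qed (use assms in \<open>auto simp: unitriangular_level_def\<close>)

lemma unitriangular_level_upper_triangular:
  assumes "A \<in> unitriangular_level n k"
  shows "upper_triangular A"
proof (rule upper_triangularI)
  fix i j assume ij: "j < i" "i < dim_row A"
  have A: "A \<in> carrier_mat n n" "zero_below_superdiag (Suc k) (A - 1\<^sub>m n)"
    using assms by (auto simp: unitriangular_level_def)
  then have "(A - 1\<^sub>m n) $$ (i, j) = 0"
    using ij unfolding zero_below_superdiag_def by auto
  then show "A $$ (i, j) = 0" using A ij by simp
qed

lemma unitriangular_level_mult_closed: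
  assumes A: "A \<in> unitriangular_level n k" and B: "B \<in> unitriangular_level n k"
  shows "A * B \<in> unitriangular_level n k"
proof -
  have Ac: "A \<in> carrier_mat n n" and Bc: "B \<in> carrier_mat n n"
    using A B by (auto simp: unitriangular_level_def)
  have "zero_below_superdiag (Suc k + 0) ((A - 1\<^sub>m n) * B)"
    using A Bc unitriangular_level_upper_triangular[OF B]
    by (intro zero_below_superdiag_mult upper_triangular_imp_zero_below_superdiag)
      (auto simp: unitriangular_level_def)
  moreover have "A * B - 1\<^sub>m n = (A - 1\<^sub>m n) * B + (B - 1\<^sub>m n)"
    using Ac Bc by (simp add: minus_mult_distrib_mat) (intro eq_matI; simp)
  ultimately show ?thesis
    using A B Ac Bc unfolding unitriangular_level_def
    by (auto intro!: zero_below_superdiag_add[where n = n])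
qed

lemma unitriangular_level_inverse:
  assumes A: "A \<in> unitriangular_level n k"
    and B: "B \<in> carrier_mat n n" "upper_triangular B" "B * A = 1\<^sub>m n" "A * B = 1\<^sub>m n"
  shows "B \<in> unitriangular_level n k"
proof -
  have Ac: "A \<in> carrier_mat n n" using A by (simp add: unitriangular_level_def)
  have "(B - 1\<^sub>m n) * A = B * A - 1\<^sub>m n * A"
    using Ac B by (intro minus_mult_distrib_mat) auto
  also have "\<dots> = - (A - 1\<^sub>m n)"
    using Ac B by (intro eq_matI) auto
  finally have "zero_below_superdiag (Suc k) ((B - 1\<^sub>m n) * A)"
    using A by (simp add: unitriangular_level_def zero_below_superdiag_uminus)
  then have "zero_below_superdiag (Suc k) (B - 1\<^sub>m n)"
    by (rule zero_below_superdiag_cancel_right[rotated -1]) (use Ac B in auto)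
  then show ?thesis
    using B by (simp add: unitriangular_level_def)
qed

section \<open>Commutators and the lower central series\<close>

definition commutator :: "('g, 'b) monoid_scheme \<Rightarrow> 'g \<Rightarrow> 'g \<Rightarrow> 'g" where
  "commutator G a b = a \<otimes>\<^bsub>G\<^esub> b \<otimes>\<^bsub>G\<^esub> inv\<^bsub>G\<^esub> a \<otimes>\<^bsub>G\<^esub> inv\<^bsub>G\<^esub> b"

lemma comm_set_eq: "comm_set G A B = {commutator G a b |a b. a \<in> A \<and> b \<in> B}"
  by (simp add: comm_set_def commutator_def)

context group
begin

lemma commutator_closed [intro, simp]:
  "a \<in> carrier G \<Longrightarrow> b \<in> carrier G \<Longrightarrow> commutator G a b \<in> carrier G"
  by (simp add: commutator_def)

lemma commutator_mult_swap:
  "a \<in> carrier G \<Longrightarrow> b \<in> carrier G \<Longrightarrow> commutator G a b \<otimes> b \<otimes> a = a \<otimes> b"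
  by (simp add: commutator_def m_assoc)

lemma conj_eq_commutator_mult:
  "a \<in> carrier G \<Longrightarrow> b \<in> carrier G \<Longrightarrow> a \<otimes> b \<otimes> inv a = commutator G a b \<otimes> b"
  by (simp add: commutator_def m_assoc)

lemma commutator_in_normal:
  assumes "N \<lhd> G" "a \<in> carrier G" "b \<in> N"
  shows "commutator G a b \<in> N"
proof -
  interpret normal N G by fact
  show ?thesis
    using assms inv_op_closed2 unfolding commutator_def by (simp add: m_inv_closed)
qed

lemma lower_central_closed: "H \<subseteq> carrier G \<Longrightarrow> lower_central G H k \<subseteq> carrier G"
  by (induction k) (auto simp: comm_set_eq intro!: generate_incl)

lemma one_in_lower_central: "subgroup H G \<Longrightarrow> \<one> \<in> lower_central G H k"
  by (cases k) (auto simp: subgroup.one_closed generate.one)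

lemma lower_central_subset_filtration:
  assumes "H \<subseteq> L 0" "\<And>k. subgroup (L k) G"
    and "\<And>k a b. a \<in> L k \<Longrightarrow> b \<in> H \<Longrightarrow> commutator G a b \<in> L (Suc k)"
  shows "lower_central G H k \<subseteq> L k"
proof (induction k)
  case (Suc k)
  then have "comm_set G (lower_central G H k) H \<subseteq> L (Suc k)"
    using assms(3) by (auto simp: comm_set_eq)
  then show ?case using generate_subgroup_incl[OF _ assms(2)] by simp
qed (use assms(1) in simp)

lemma iterated_commutator_in_lower_central:
  assumes "h \<in> H" "g \<in> H"
  shows "((\<lambda>x. commutator G x g) ^^ k) h \<in> lower_central G H k"
proof (induction k)
  case (Suc k)
  then show ?case using assms(2) by (auto simp: comm_set_eq intro: generate.incl)
qed (use assms(1) in simp)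

end

context group_hom
begin

lemma hom_commutator:
  "a \<in> carrier G \<Longrightarrow> b \<in> carrier G \<Longrightarrow> h (commutator G a b) = commutator H (h a) (h b)"
  by (simp add: commutator_def)

lemma image_comm_set:
  assumes "A \<subseteq> carrier G" "B \<subseteq> carrier G"
  shows "h ` comm_set G A B = comm_set H (h ` A) (h ` B)"
proof -
  have "h ` comm_set G A B = {h (commutator G a b) |a b. a \<in> A \<and> b \<in> B}"
    by (auto simp: comm_set_eq)
  also have "\<dots> = {commutator H (h a) (h b) |a b. a \<in> A \<and> b \<in> B}"
    using assms hom_commutator by (metis (no_types, opaque_lifting) subsetD)
  also have "\<dots> = comm_set H (h ` A) (h ` B)"
    by (auto simp: comm_set_eq)
  finally show ?thesis .
qed

lemma image_lower_central:
  assumes "K \<subseteq> carrier G"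
  shows "h ` lower_central G K k = lower_central H (h ` K) k"
proof (induction k)
  case (Suc k)
  have "comm_set G (lower_central G K k) K \<subseteq> carrier G"
    using G.lower_central_closed[OF assms] assms by (auto simp: comm_set_eq)
  then have "h ` lower_central G K (Suc k) = generate H (h ` comm_set G (lower_central G K k) K)"
    by (simp add: generate_img)
  also have "h ` comm_set G (lower_central G K k) K = comm_set H (lower_central H (h ` K) k) (h ` K)"
    using image_comm_set[OF G.lower_central_closed[OF assms] assms] Suc by simp
  finally show ?case by simp
qed simp

lemma nilpotent_image:
  assumes "nilpotent_subgroup G K"
  shows "nilpotent_subgroup H (h ` K)"
proof -
  obtain k where "lower_central G K k = {\<one>\<^bsub>G\<^esub>}" "subgroup K G"
    using assms unfolding nilpotent_subgroup_def by blast
  moreover have "h ` lower_central G K k = lower_central H (h ` K) k"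
    using image_lower_central subgroup.subset[OF \<open>subgroup K G\<close>] by blast
  ultimately show ?thesis
    unfolding nilpotent_subgroup_def using subgroup_img_is_subgroup by auto
qed

lemma locally_nilpotent_image:
  assumes N: "locally_nilpotent_subgroup G N"
  shows "locally_nilpotent_subgroup H (h ` N)"
  unfolding locally_nilpotent_subgroup_def
proof (intro conjI allI impI)
  have "subgroup N G" using N unfolding locally_nilpotent_subgroup_def by blast
  then show "subgroup (h ` N) H" by (rule subgroup_img_is_subgroup)
  fix F assume "finite F \<and> F \<subseteq> h ` N"
  then obtain F' where F': "F' \<subseteq> N" "finite F'" "F = h ` F'"
    by (meson finite_subset_image)
  then have "nilpotent_subgroup G (generate G F')"
    using N unfolding locally_nilpotent_subgroup_def by blast
  moreover have "F' \<subseteq> carrier G" using F' \<open>subgroup N G\<close> subgroup.subset by blast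
  ultimately show "nilpotent_subgroup H (generate H F)"
    using nilpotent_image generate_img F'(3) by simp
qed

end

lemma (in group) iso_group_hom: "\<phi> \<in> iso G G \<Longrightarrow> group_hom G G \<phi>"
  by (simp add: group_hom_def group_hom_axioms_def is_group iso_iff)

lemma (in group) hirsch_plotkin_radical_characteristic:
  assumes R: "hirsch_plotkin_radical G R"
  shows "characteristic_subgroup G R"
proof -
  have image_subset: "\<phi> ` R \<subseteq> R" if "\<phi> \<in> iso G G" for \<phi>
  proof -
    interpret group_hom G G \<phi> using that by (rule iso_group_hom)
    show ?thesis
      using R iso_normal_subgroup[OF that is_group is_group] locally_nilpotent_image
      unfolding hirsch_plotkin_radical_def by blast
  qed
  have image_supset: "R \<subseteq> \<phi> ` R" if \<phi>: "\<phi> \<in> iso G G" for \<phi>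
  proof
    fix r assume r: "r \<in> R"
    have "r \<in> carrier G"
      using R r unfolding hirsch_plotkin_radical_def by (auto dest: normal_imp_subgroup subgroup.subset)
    then have "r = \<phi> (inv_into (carrier G) \<phi> r)"
      using \<phi> by (simp add: iso_iff f_inv_into_f)
    moreover have "inv_into (carrier G) \<phi> r \<in> R"
      using image_subset[OF iso_set_sym[OF \<phi>]] r by blast
    ultimately show "r \<in> \<phi> ` R" by blast
  qed
  show ?thesis
    using R image_subset image_supset
    unfolding characteristic_subgroup_def hirsch_plotkin_radical_def
    by (simp add: normal_imp_subgroup subset_antisym)
qed

section \<open>The groups S^I_n(R) and U_n(R)\<close>

lemma S_matD:
  assumes "A \<in> S_mat n I"
  shows "A \<in> carrier_mat n n" "upper_triangular A"
    and "i < n \<Longrightarrow> A $$ (i, i) dvd 1" "i < n \<Longrightarrow> i \<notin> I \<Longrightarrow> A $$ (i, i) = 1"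
  using assms by (auto simp: S_mat_def)

lemma S_mat_diag_nonzero: "A \<in> S_mat n I \<Longrightarrow> i < n \<Longrightarrow> A $$ (i, i) \<noteq> 0"
  using S_matD(3) by fastforce

lemma one_in_S_mat: "1\<^sub>m n \<in> S_mat n I"
  by (auto simp: S_mat_def)

lemma S_mat_mult_closed:
  assumes "A \<in> S_mat n I" "B \<in> S_mat n I"
  shows "A * B \<in> S_mat n I"
  using S_matD[OF assms(1)] S_matD[OF assms(2)]
    upper_triangular_mult diag_mult_upper_triangular[of A n B]
  by (auto simp: S_mat_def)

lemma S_mat_left_inverse:
  fixes A B :: "'a::idom mat"
  assumes A: "A \<in> S_mat n I" and B: "B \<in> carrier_mat n n" and BA: "B * A = 1\<^sub>m n"
  shows "B \<in> S_mat n I"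
proof -
  have ut: "upper_triangular B"
    using left_inverse_upper_triangular S_matD[OF A] S_mat_diag_nonzero[OF A] B BA by blast
  have inv_diag: "B $$ (i, i) * A $$ (i, i) = 1" if "i < n" for i
    using diag_mult_upper_triangular[OF B ut S_matD(1,2)[OF A] that] BA that by simp
  then have "B $$ (i, i) dvd 1" if "i < n" for i
    using that by (metis dvd_triv_left)
  then show ?thesis
    using B ut inv_diag S_matD(4)[OF A] unfolding S_mat_def by force
qed

lemma S_mat_has_left_inverse:
  fixes A :: "'a::idom mat"
  assumes A: "A \<in> S_mat n I"
  shows "\<exists>B \<in> carrier_mat n n. B * A = 1\<^sub>m n"
proof -
  note Ac = S_matD(1)[OF A]
  have units_prod: "prod_list xs dvd 1" if "\<forall>x \<in> set xs. x dvd 1" for xs :: "'a list"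
    using that by (induction xs) auto
  have "det A = prod_list (diag_mat A)"
    using det_upper_triangular S_matD(1,2)[OF A] by blast
  also have "\<dots> dvd 1"
    using units_prod S_matD(1,3)[OF A] by (auto simp: diag_mat_def)
  finally obtain u where u: "det A * u = 1" by (metis dvdE)
  have "(u \<cdot>\<^sub>m adj_mat A) * A = u \<cdot>\<^sub>m (adj_mat A * A)"
    by (rule mult_smult_assoc_mat[OF adj_mat(1)[OF Ac] Ac])
  also have "\<dots> = 1\<^sub>m n"
    using adj_mat(3)[OF Ac] u by (intro eq_matI) (auto simp: mult.commute)
  finally show ?thesis using adj_mat(1)[OF Ac] by auto
qed

lemma group_S_group: "group (S_group n I :: 'a::idom mat monoid)"
proof (rule groupI)
  fix A assume "A \<in> carrier (S_group n I :: 'a mat monoid)"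
  then show "\<exists>B \<in> carrier (S_group n I). B \<otimes>\<^bsub>S_group n I\<^esub> A = \<one>\<^bsub>S_group n I\<^esub>"
    using S_mat_has_left_inverse S_mat_left_inverse by (fastforce simp: S_group_def)
qed (auto simp: S_group_def one_in_S_mat S_mat_mult_closed,
     auto dest!: S_matD(1) simp: assoc_mult_mat[of _ n n _ n _ n])

lemma exists_adjacent_neq:
  assumes "p < n" "q < n" "f p \<noteq> f q"
  shows "\<exists>i. Suc i < n \<and> f i \<noteq> f (Suc i)"
proof (rule ccontr)
  assume "\<not> ?thesis"
  then have "f m = f 0" if "m < n" for m
    using that by (induction m) auto
  then have "f p = f q" using assms(1,2) by metis
  with assms(3) show False ..
qed

locale upper_triangular_group =
  fixes n :: nat and I :: "nat set" and G :: "'a::idom mat monoid" (structure)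
  assumes G_def: "G = S_group n I"
begin

sublocale group G
  using group_S_group G_def by simp

lemma carrier_G [simp]: "carrier G = S_mat n I"
  and one_G [simp]: "\<one> = 1\<^sub>m n"
  and mult_G: "A \<otimes> B = A * B"
  by (simp_all add: G_def S_group_def)

lemma inv_G:
  assumes "A \<in> S_mat n I"
  shows "inv A \<in> S_mat n I" "inv A * A = 1\<^sub>m n" "A * inv A = 1\<^sub>m n"
  using assms l_inv r_inv inv_closed by (auto simp: mult_G)

lemma S_mat_diag_mult:
  "A \<in> S_mat n I \<Longrightarrow> B \<in> S_mat n I \<Longrightarrow> i < n \<Longrightarrow> (A * B) $$ (i, i) = A $$ (i, i) * B $$ (i, i)"
  using diag_mult_upper_triangular S_matD(1,2) by blast

lemma S_mat_superdiag_mult: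
  "A \<in> S_mat n I \<Longrightarrow> B \<in> S_mat n I \<Longrightarrow> Suc i < n \<Longrightarrow>
    (A * B) $$ (i, Suc i) = A $$ (i, i) * B $$ (i, Suc i) + A $$ (i, Suc i) * B $$ (Suc i, Suc i)"
  using superdiag_mult_upper_triangular S_matD(1,2) by blast

lemma U_subset_S: "U_mat n \<subseteq> S_mat n I"
  by (auto simp: U_mat_def S_mat_def)

lemma unitriangular_level_subset_S: "unitriangular_level n k \<subseteq> S_mat n I"
  using unitriangular_level_antimono[of 0 k] U_mat_eq_unitriangular_level_0 U_subset_S by blast

lemma subgroup_unitriangular_level: "subgroup (unitriangular_level n k) G"
proof
  fix A :: "'a mat" assume A: "A \<in> unitriangular_level n k"
  then have AS: "A \<in> S_mat n I" using unitriangular_level_subset_S by blast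
  show "inv A \<in> unitriangular_level n k"
    using unitriangular_level_inverse[OF A] S_matD(1,2)[OF inv_G(1)[OF AS]] inv_G(2,3)[OF AS] by blast
next
  show "\<one> \<in> unitriangular_level n k"
    by (simp add: unitriangular_level_def zero_below_superdiag_def)
next
  show "unitriangular_level n k \<subseteq> carrier G"
    using unitriangular_level_subset_S by simp
next
  fix A B :: "'a mat" assume "A \<in> unitriangular_level n k" "B \<in> unitriangular_level n k"
  then show "A \<otimes> B \<in> unitriangular_level n k"
    unfolding mult_G by (rule unitriangular_level_mult_closed)
qed

lemma commutator_unitriangular_level:
  assumes a: "a \<in> unitriangular_level n k" and b: "b \<in> unitriangular_level n l"
  shows "commutator G a b \<in> unitriangular_level n (Suc (k + l))"
proof -
  have aS: "a \<in> S_mat n I" and bS: "b \<in> S_mat n I"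
    using a b unitriangular_level_subset_S by blast+
  define c where "c = commutator G a b"
  have cS: "c \<in> S_mat n I" unfolding c_def using aS bS commutator_closed[of a b] by simp
  note carriers = S_matD(1)[OF aS] S_matD(1)[OF bS] S_matD(1)[OF cS]
  have "c \<otimes> b \<otimes> a = a \<otimes> b"
    unfolding c_def using aS bS by (simp add: commutator_mult_swap)
  then have "c * (b * a) = a * b"
    using carriers by (simp add: mult_G assoc_mult_mat[of c n n b n a n])
  then have "(c - 1\<^sub>m n) * (b * a) = a * b - b * a"
    using carriers by (simp add: minus_mult_distrib_mat[of c n n "1\<^sub>m n" "b * a" n])
  also have "\<dots> = (a - 1\<^sub>m n) * (b - 1\<^sub>m n) - (b - 1\<^sub>m n) * (a - 1\<^sub>m n)"
    using carriers(1,2) by (rule commutator_minus_mat)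
  finally have comm_eq:
    "(c - 1\<^sub>m n) * (b * a) = (a - 1\<^sub>m n) * (b - 1\<^sub>m n) - (b - 1\<^sub>m n) * (a - 1\<^sub>m n)" .
  have "zero_below_superdiag (Suc k + Suc l) ((a - 1\<^sub>m n) * (b - 1\<^sub>m n))"
    using a b by (intro zero_below_superdiag_mult[where n = n]) (auto simp: unitriangular_level_def)
  moreover have "zero_below_superdiag (Suc l + Suc k) ((b - 1\<^sub>m n) * (a - 1\<^sub>m n))"
    using a b by (intro zero_below_superdiag_mult[where n = n]) (auto simp: unitriangular_level_def)
  ultimately have zb: "zero_below_superdiag (Suc (Suc (k + l))) ((c - 1\<^sub>m n) * (b * a))"
    unfolding comm_eq using carriers
    by (intro zero_below_superdiag_minus[where n = n]) (auto simp: add.commute)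
  have "b \<otimes> a \<otimes> (inv a \<otimes> inv b) = \<one>"
    using aS bS m_closed[of b a] by (simp add: inv_mult_group[symmetric])
  then have inv_prod: "b * a * (inv a * inv b) = 1\<^sub>m n"
    by (simp add: mult_G)
  have "inv a * inv b \<in> S_mat n I"
    using aS bS by (simp add: S_mat_mult_closed inv_G)
  then have "zero_below_superdiag (Suc (Suc (k + l))) (c - 1\<^sub>m n)"
    using carriers S_mat_mult_closed[OF bS aS]
    by (intro zero_below_superdiag_cancel_right[OF _ _ _ inv_prod _ zb]) (auto dest: S_matD)
  then show ?thesis
    using carriers unfolding c_def unitriangular_level_def by simp
qed

lemma commutator_in_U:
  assumes x: "x \<in> S_mat n I" and y: "y \<in> S_mat n I"
  shows "commutator G x y \<in> U_mat n"
proof -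
  define c where "c = commutator G x y"
  have cS: "c \<in> S_mat n I" unfolding c_def using x y commutator_closed[of x y] by simp
  have "c \<otimes> y \<otimes> x = x \<otimes> y"
    unfolding c_def using x y by (simp add: commutator_mult_swap)
  then have swap: "c * y * x = x * y" by (simp add: mult_G)
  have "c $$ (i, i) = 1" if i: "i < n" for i
  proof -
    have "(c * y * x) $$ (i, i) = c $$ (i, i) * y $$ (i, i) * x $$ (i, i)"
      using i x y cS by (simp add: S_mat_diag_mult S_mat_mult_closed)
    moreover have "(x * y) $$ (i, i) = x $$ (i, i) * y $$ (i, i)"
      using i x y by (simp add: S_mat_diag_mult)
    ultimately have "c $$ (i, i) * y $$ (i, i) * x $$ (i, i) = x $$ (i, i) * y $$ (i, i)"
      using swap by metis
    then have "(c $$ (i, i) - 1) * (x $$ (i, i) * y $$ (i, i)) = 0"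
      by (simp add: algebra_simps)
    then show ?thesis
      using S_mat_diag_nonzero[OF x i] S_mat_diag_nonzero[OF y i] by simp
  qed
  then show ?thesis
    using S_matD(1,2)[OF cS] unfolding c_def U_mat_def by simp
qed

lemma U_subgroup: "subgroup (U_mat n) G"
  using subgroup_unitriangular_level U_mat_eq_unitriangular_level_0 by metis

lemma U_normal: "U_mat n \<lhd> G"
proof -
  have "x \<otimes> h \<otimes> inv x \<in> U_mat n" if x: "x \<in> carrier G" and h: "h \<in> U_mat n" for x h
  proof -
    have "commutator G x h \<in> U_mat n"
      using commutator_in_U x h U_subset_S by auto
    then show ?thesis
      using conj_eq_commutator_mult[of x h] x h U_subset_S subgroup.m_closed[OF U_subgroup] by auto
  qed
  then show ?thesis
    using U_subgroup normal_inv_iff by blast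
qed

lemma nilpotent_subgroup_of_U:
  assumes "subgroup H G" "H \<subseteq> U_mat n"
  shows "nilpotent_subgroup G H"
proof -
  have "lower_central G H n \<subseteq> unitriangular_level n n"
  proof (rule lower_central_subset_filtration[where L = "unitriangular_level n"])
    fix k and a b :: "'a mat" assume "a \<in> unitriangular_level n k" "b \<in> H"
    then show "commutator G a b \<in> unitriangular_level n (Suc k)"
      using commutator_unitriangular_level[of a k b 0] assms(2) U_mat_eq_unitriangular_level_0
      by auto
  qed (use assms(2) U_mat_eq_unitriangular_level_0 subgroup_unitriangular_level in auto)
  then have "lower_central G H n = {\<one>}"
    using unitriangular_level_top one_in_lower_central[OF assms(1)] by auto
  then show ?thesis
    using assms(1) unfolding nilpotent_subgroup_def by blast
qed

lemma U_locally_nilpotent: "locally_nilpotent_subgroup G (U_mat n)"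
  unfolding locally_nilpotent_subgroup_def
proof (intro conjI allI impI U_subgroup)
  fix F :: "'a mat set" assume F: "finite F \<and> F \<subseteq> U_mat n"
  then have "F \<subseteq> carrier G" using U_subset_S by auto
  then show "nilpotent_subgroup G (generate G F)"
    using F generate_subgroup_incl[OF _ U_subgroup]
    by (intro nilpotent_subgroup_of_U generate_is_subgroup) auto
qed

lemma commutator_superdiag:
  assumes u: "u \<in> U_mat n" and x: "x \<in> S_mat n I" and i: "Suc i < n"
  shows "commutator G u x $$ (i, Suc i) * x $$ (Suc i, Suc i)
    = u $$ (i, Suc i) * (x $$ (Suc i, Suc i) - x $$ (i, i))"
proof -
  have uS: "u \<in> S_mat n I" using u U_subset_S by blast
  define c where "c = commutator G u x"
  have cU: "c \<in> U_mat n" unfolding c_def using commutator_in_U uS x .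
  have cS: "c \<in> S_mat n I" using cU U_subset_S by blast
  have "c \<otimes> x \<otimes> u = u \<otimes> x"
    unfolding c_def using uS x by (simp add: commutator_mult_swap)
  then have swap: "c * x * u = u * x" by (simp add: mult_G)
  have unit_diag: "c $$ (j, j) = 1" "u $$ (j, j) = 1" if "j < n" for j
    using cU u that by (simp_all add: U_mat_def)
  have "(c * x * u) $$ (i, Suc i)
      = x $$ (i, i) * u $$ (i, Suc i) + (x $$ (i, Suc i) + c $$ (i, Suc i) * x $$ (Suc i, Suc i))"
    using cS x uS i unit_diag[of i] unit_diag[of "Suc i"]
    by (simp add: S_mat_superdiag_mult S_mat_diag_mult S_mat_mult_closed)
  moreover have "(u * x) $$ (i, Suc i) = x $$ (i, Suc i) + u $$ (i, Suc i) * x $$ (Suc i, Suc i)"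
    using x uS i unit_diag[of i] by (simp add: S_mat_superdiag_mult)
  ultimately show ?thesis
    using swap unfolding c_def[symmetric] by (simp add: algebra_simps)
qed

lemma normal_locally_nilpotent_subset_U:
  assumes q: "q < n" "q \<notin> I" and N: "N \<lhd> G" "locally_nilpotent_subgroup G N"
  shows "N \<subseteq> U_mat n"
proof
  fix g assume gN: "g \<in> N"
  have gS: "g \<in> S_mat n I"
    using gN normal_imp_subgroup[OF N(1)] subgroup.subset by fastforce
  show "g \<in> U_mat n"
  proof (rule ccontr)
    assume "g \<notin> U_mat n"
    then obtain p where "p < n" "g $$ (p, p) \<noteq> 1"
      using S_matD(1,2)[OF gS] unfolding U_mat_def by auto
    moreover have "g $$ (q, q) = 1" using S_matD(4)[OF gS q] .
    ultimately obtain i where i: "Suc i < n" and jump: "g $$ (i, i) \<noteq> g $$ (Suc i, Suc i)"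
      using exists_adjacent_neq[of p n q "\<lambda>k. g $$ (k, k)"] q by auto
    have step: "commutator G u g \<in> U_mat n \<and> commutator G u g $$ (i, Suc i) \<noteq> 0"
      if "u \<in> U_mat n" "u $$ (i, Suc i) \<noteq> 0" for u
      using that commutator_in_U[of u g] U_subset_S gS commutator_superdiag[OF that(1) gS i] jump
      by auto
    define t :: "'a mat" where "t = addrow_mat n 1 i (Suc i)"
    have t: "t \<in> U_mat n" "t $$ (i, Suc i) = 1"
      using i unfolding t_def U_mat_def by (auto intro!: upper_triangularI)
    define h where "h k = ((\<lambda>x. commutator G x g) ^^ k) (commutator G t g)" for k
    have h: "h k \<in> U_mat n \<and> h k $$ (i, Suc i) \<noteq> 0" for k
      by (induction k) (use step t in \<open>auto simp: h_def\<close>)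
    have "commutator G t g \<in> N"
      using commutator_in_normal[OF N(1)] t(1) U_subset_S gN by auto
    then have "nilpotent_subgroup G (generate G {g, commutator G t g})"
      using N(2) gN unfolding locally_nilpotent_subgroup_def by auto
    then obtain k where "lower_central G (generate G {g, commutator G t g}) k = {\<one>}"
      unfolding nilpotent_subgroup_def by blast
    moreover have "h k \<in> lower_central G (generate G {g, commutator G t g}) k"
      unfolding h_def by (intro iterated_commutator_in_lower_central generate.incl) auto
    ultimately show False
      using h[of k] i by simp
  qed
qed

lemma hirsch_plotkin_radical_U:
  assumes "q < n" "q \<notin> I"
  shows "hirsch_plotkin_radical G (U_mat n)"
  unfolding hirsch_plotkin_radical_def
  using U_normal U_locally_nilpotent normal_locally_nilpotent_subset_U[OF assms] by blast

end

theorem mainTheorem7: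
  fixes n :: nat and I :: "nat set"
  assumes "n \<ge> 2" and "I \<subset> {0..<n}"
  shows "hirsch_plotkin_radical (S_group n I :: 'a::idom mat monoid) (U_mat n)
       \<and> characteristic_subgroup (S_group n I :: 'a::idom mat monoid) (U_mat n)"
proof -
  interpret upper_triangular_group n I "S_group n I :: 'a mat monoid"
    by unfold_locales simp
  obtain q where "q \<in> {0..<n} - I" using assms(2) by blast
  then have "q < n" "q \<notin> I" by auto
  then have "hirsch_plotkin_radical (S_group n I) (U_mat n :: 'a mat set)"
    by (rule hirsch_plotkin_radical_U)
  then show ?thesis
    using hirsch_plotkin_radical_characteristic by blast
qed

end
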